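(* Let $c(u),p(u),s(u)$ be arbitrary smooth functions. For every smooth function $f(u)$ define $H_f=\int h_f\,dx$ with $$h_f=f-\frac{\epsilon^2}{24}c\,f'''u_x^2+\epsilon^4\Big[\Big(p\,f'''+\frac{c^2f^{(4)}}{480}\Big)u_{xx}^2-\Big(\frac{c\,c''f^{(4)}}{1152}+\frac{c\,c'f^{(5)}}{1152}+\frac{c^2f^{(6)}}{3456}+\frac{p'f^{(4)}}{6}+\frac{p\,f^{(5)}}{6}-s\,f'''\Big)u_x^4\Big],$$ where $c=c(u)$, $p=p(u)$, $s=s(u)$, $f=f(u)$ and primes denote $d/du$. Then for any two smooth functions $f,g$, $$\{H_f,H_g\}=O(\epsilon^6),$$ i.e. $\mathcal E\big(\frac{\delta H_f}{\delta u(x)}\partial_x\frac{\delta H_g}{\delta u(x)}\big)=O(\epsilon^6)$. In particular, since $H_{u^3/6}=\int[\frac{u^3}{6}-\epsilon^2\frac{c}{24}u_x^2+\epsilon^4(p\,u_{xx}^2+s\,u_x^4)]dx$, every flow $u_s+\partial_x\frac{\delta H_f}{\delta u(x)}=0$ is, modulo $O(\epsilon^6)$, a symmetry of $u_t+\partial_x\frac{\delta H_{u^3/6}}{\delta u(x)}=0$. *)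

theory Defs
  imports "HOL-Analysis.Analysis" "HOL-Library.Landau_Symbols"
begin

definition smooth :: "(real \<Rightarrow> real) \<Rightarrow> bool" where
  "smooth f \<longleftrightarrow> (\<forall>n. (deriv ^^ n) f differentiable_on UNIV)"

text \<open>Local densities are functions of the jet U, where U 0 = u, U 1 = u_x,
  U 2 = u_xx, ..., U k = the k-th x-derivative of u.\<close>
type_synonym jetfun = "(nat \<Rightarrow> real) \<Rightarrow> real"

definition jet_pd :: "nat \<Rightarrow> jetfun \<Rightarrow> jetfun" where
  "jet_pd k F U = deriv (\<lambda>t. F (U(k := t))) (U k)"

text \<open>Total x-derivative, exact for densities depending only on u_0, ..., u_(N-1).\<close>
definition total_D :: "nat \<Rightarrow> jetfun \<Rightarrow> jetfun" where
  "total_D N F U = (\<Sum>k<N. U (Suc k) * jet_pd k F U)"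

definition var_deriv :: "nat \<Rightarrow> jetfun \<Rightarrow> jetfun" where
  "var_deriv N F U = (\<Sum>k<N. (-1) ^ k * (total_D N ^^ k) (jet_pd k F) U)"

definition ham_density ::
  "(real \<Rightarrow> real) \<Rightarrow> (real \<Rightarrow> real) \<Rightarrow> (real \<Rightarrow> real) \<Rightarrow> (real \<Rightarrow> real) \<Rightarrow> real \<Rightarrow> jetfun" where
  "ham_density c p s f eps U =
     (let u = U 0; ux = U 1; uxx = U 2; d = (\<lambda>n g. (deriv ^^ n) g u) in
        f u - eps ^ 2 / 24 * c u * d 3 f * ux ^ 2
      + eps ^ 4 * ((p u * d 3 f + (c u) ^ 2 * d 4 f / 480) * uxx ^ 2
          - (c u * d 2 c * d 4 f / 1152 + c u * d 1 c * d 5 f / 1152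
             + (c u) ^ 2 * d 6 f / 3456 + d 1 p * d 4 f / 6 + p u * d 5 f / 6
             - s u * d 3 f) * ux ^ 4))"

definition bracket_density :: "nat \<Rightarrow> jetfun \<Rightarrow> jetfun \<Rightarrow> jetfun" where
  "bracket_density N h1 h2 U = var_deriv N h1 U * total_D N (var_deriv N h2) U"

end

theory Submission
  imports Defs "HOL-Library.Comparator"
begin

text \<open>Both densities are polynomials in eps, u_x, u_xx and the derivatives c^(n)(u), p^(n)(u),
  s^(n)(u), f^(n)(u), g^(n)(u). Treating these derivatives as independent variables, on which
  d/du acts by raising the order, the partial derivatives in jet space, the total x-derivative
  and the Euler operator become operations on polynomials with integer coefficients, sound by
  evaluation. The part of the bracket density of eps-degree below 6 then has vanishing Euler
  derivative, which is verified by symbolic computation, and the remaining part is eps^6 times a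
  polynomial that is continuous in eps.\<close>

section \<open>Polynomials in jet variables\<close>

text \<open>Jet k stands for the jet coordinate U k, Coeff i n for the n-th
  derivative at U 0 of the i-th coefficient function, and Scale for the constant 1/17280, which
  clears the denominators of the densities.\<close>

datatype var = Eps | Scale | Jet nat | Coeff nat nat

type_synonym monomial = "(var \<times> nat) list"
type_synonym jpoly = "(int \<times> monomial) list"

text \<open>Monomials and polynomials are kept sorted so that products and sums are merges; soundness
  only uses that compare_monomial m n = Equiv implies m = n.\<close>

definition compare_nat :: "nat \<Rightarrow> nat \<Rightarrow> comp" where
  "compare_nat a b = (if a < b then Less else if a = b then Equiv else Greater)"

fun compare_var :: "var \<Rightarrow> var \<Rightarrow> comp" where
  "compare_var Eps Eps = Equiv" | "compare_var Eps _ = Less" | "compare_var _ Eps = Greater"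
| "compare_var Scale Scale = Equiv" | "compare_var Scale _ = Less" | "compare_var _ Scale = Greater"
| "compare_var (Jet a) (Jet b) = compare_nat a b" | "compare_var (Jet _) _ = Less"
| "compare_var _ (Jet _) = Greater"
| "compare_var (Coeff i n) (Coeff j m) = (if i = j then compare_nat n m else compare_nat i j)"

fun compare_monomial :: "monomial \<Rightarrow> monomial \<Rightarrow> comp" where
  "compare_monomial [] [] = Equiv" | "compare_monomial [] _ = Less"
| "compare_monomial _ [] = Greater"
| "compare_monomial ((v, e) # m) ((w, f) # n) =
     (if compare_var v w = Equiv then (if e = f then compare_monomial m n else compare_nat e f)
      else compare_var v w)"

lemma compare_nat_Equiv: "compare_nat a b = Equiv \<Longrightarrow> a = b"
  by (simp add: compare_nat_def split: if_splits)

lemma compare_var_Equiv: "compare_var v w = Equiv \<Longrightarrow> v = w"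
  by (induction v w rule: compare_var.induct) (auto dest: compare_nat_Equiv split: if_splits)

lemma compare_monomial_Equiv: "compare_monomial m n = Equiv \<Longrightarrow> m = n"
  by (induction m n rule: compare_monomial.induct)
    (auto dest: compare_var_Equiv compare_nat_Equiv split: if_splits)

fun monomial_mult :: "monomial \<Rightarrow> monomial \<Rightarrow> monomial" where
  "monomial_mult [] n = n"
| "monomial_mult m [] = m"
| "monomial_mult ((v, e) # m) ((w, f) # n) =
     (if compare_var v w = Less then (v, e) # monomial_mult m ((w, f) # n)
      else if compare_var v w = Greater then (w, f) # monomial_mult ((v, e) # m) n
      else (v, e + f) # monomial_mult m n)"

fun jpoly_add :: "jpoly \<Rightarrow> jpoly \<Rightarrow> jpoly" where
  "jpoly_add [] q = q"
| "jpoly_add p [] = p"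
| "jpoly_add ((a, m) # p) ((b, n) # q) =
     (if compare_monomial m n = Less then (a, m) # jpoly_add p ((b, n) # q)
      else if compare_monomial m n = Greater then (b, n) # jpoly_add ((a, m) # p) q
      else if a + b = 0 then jpoly_add p q else (a + b, m) # jpoly_add p q)"

fun jpoly_normalize :: "jpoly \<Rightarrow> jpoly" where
  "jpoly_normalize [] = []"
| "jpoly_normalize [t] = (if fst t = 0 then [] else [t])"
| "jpoly_normalize (t # t' # p) =
     jpoly_add (jpoly_normalize (take (Suc (Suc (length p)) div 2) (t # t' # p)))
       (jpoly_normalize (drop (Suc (Suc (length p)) div 2) (t # t' # p)))"

definition jpoly_scale :: "int \<Rightarrow> monomial \<Rightarrow> jpoly \<Rightarrow> jpoly" where
  "jpoly_scale a m q = map (\<lambda>(b, n). (a * b, monomial_mult m n)) q"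

definition var_power :: "var \<Rightarrow> nat \<Rightarrow> monomial" where
  "var_power v e = (if e = 0 then [] else [(v, e)])"

definition eval_monomial :: "(var \<Rightarrow> real) \<Rightarrow> monomial \<Rightarrow> real" where
  "eval_monomial \<rho> m = (\<Prod>(v, e)\<leftarrow>m. \<rho> v ^ e)"

definition eval_jpoly :: "(var \<Rightarrow> real) \<Rightarrow> jpoly \<Rightarrow> real" where
  "eval_jpoly \<rho> p = (\<Sum>(a, m)\<leftarrow>p. of_int a * eval_monomial \<rho> m)"

lemma eval_monomial_simps [simp]:
  "eval_monomial \<rho> [] = 1"
  "eval_monomial \<rho> ((v, e) # m) = \<rho> v ^ e * eval_monomial \<rho> m"
  "eval_monomial \<rho> (m @ n) = eval_monomial \<rho> m * eval_monomial \<rho> n"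
  "eval_monomial \<rho> (var_power v e) = \<rho> v ^ e"
  by (simp_all add: eval_monomial_def var_power_def)

lemma eval_jpoly_simps [simp]:
  "eval_jpoly \<rho> [] = 0"
  "eval_jpoly \<rho> ((a, m) # p) = of_int a * eval_monomial \<rho> m + eval_jpoly \<rho> p"
  "eval_jpoly \<rho> (p @ q) = eval_jpoly \<rho> p + eval_jpoly \<rho> q"
  by (simp_all add: eval_jpoly_def)

lemma eval_jpoly_concat: "eval_jpoly \<rho> (concat ps) = (\<Sum>p\<leftarrow>ps. eval_jpoly \<rho> p)"
  by (induction ps) auto

lemma eval_monomial_mult [simp]:
  "eval_monomial \<rho> (monomial_mult m n) = eval_monomial \<rho> m * eval_monomial \<rho> n"
proof (induction m n rule: monomial_mult.induct)
  case (3 v e m w f n)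
  then show ?case
    by (cases "compare_var v w") (auto dest: compare_var_Equiv simp: power_add algebra_simps)
qed auto

lemma eval_jpoly_add [simp]: "eval_jpoly \<rho> (jpoly_add p q) = eval_jpoly \<rho> p + eval_jpoly \<rho> q"
proof (induction p q rule: jpoly_add.induct)
  case (3 a m p b n q)
  show ?case
  proof (cases "compare_monomial m n")
    case Equiv
    then have "m = n" by (rule compare_monomial_Equiv)
    show ?thesis
    proof (cases "a + b = 0")
      case True
      then have "b = - a" by simp
      then show ?thesis using 3 Equiv \<open>m = n\<close> by simp
    next
      case False
      then show ?thesis using 3 Equiv \<open>m = n\<close> by (simp add: algebra_simps)
    qed
  qed (use 3 in \<open>auto simp: algebra_simps\<close>)
qed auto

lemma eval_jpoly_normalize [simp]: "eval_jpoly \<rho> (jpoly_normalize p) = eval_jpoly \<rho> p"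
proof (induction p rule: jpoly_normalize.induct)
  case (3 t t' p)
  then show ?case
    by (simp only: jpoly_normalize.simps eval_jpoly_add flip: eval_jpoly_simps(3)) simp
qed auto

lemma eval_jpoly_scale [simp]:
  "eval_jpoly \<rho> (jpoly_scale a m q) = of_int a * eval_monomial \<rho> m * eval_jpoly \<rho> q"
  by (induction q) (auto simp: jpoly_scale_def algebra_simps)

section \<open>Derivatives and the Euler operator\<close>

fun var_pd :: "nat \<Rightarrow> var \<Rightarrow> jpoly" where
  "var_pd k (Jet j) = (if j = k then [(1, [])] else [])"
| "var_pd k (Coeff i n) = (if k = 0 then [(1, [(Coeff i (Suc n), 1)])] else [])"
| "var_pd k _ = []"

fun monomial_pd :: "nat \<Rightarrow> monomial \<Rightarrow> jpoly" where
  "monomial_pd k [] = []"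
| "monomial_pd k ((v, e) # m) =
     jpoly_scale (int e) (var_power v (e - 1)) (jpoly_scale 1 m (var_pd k v))
     @ jpoly_scale 1 [(v, e)] (monomial_pd k m)"

definition jpoly_pd :: "nat \<Rightarrow> jpoly \<Rightarrow> jpoly" where
  "jpoly_pd k p = jpoly_normalize (concat (map (\<lambda>(a, m). jpoly_scale a [] (monomial_pd k m)) p))"

fun jet_index :: "var \<Rightarrow> nat" where
  "jet_index (Jet k) = k"
| "jet_index _ = 0"

fun list_max :: "nat list \<Rightarrow> nat" where
  "list_max [] = 0"
| "list_max (x # xs) = max x (list_max xs)"

definition max_jet_index :: "jpoly \<Rightarrow> nat" where
  "max_jet_index p = list_max (map (\<lambda>t. list_max (map (\<lambda>ve. jet_index (fst ve)) (snd t))) p)"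

text \<open>jpoly_total_D N mirrors total_D N, while jpoly_D only sums up to the largest jet index
  present, which is what gets computed.\<close>

definition jpoly_total_D :: "nat \<Rightarrow> jpoly \<Rightarrow> jpoly" where
  "jpoly_total_D N p = concat (map (\<lambda>k. jpoly_scale 1 [(Jet (Suc k), 1)] (jpoly_pd k p)) [0..<N])"

definition jpoly_D :: "jpoly \<Rightarrow> jpoly" where
  "jpoly_D p = jpoly_normalize (jpoly_total_D (Suc (max_jet_index p)) p)"

text \<open>Horner form of the Euler operator: only j total derivatives are computed.\<close>

fun euler_horner :: "jpoly \<Rightarrow> nat \<Rightarrow> nat \<Rightarrow> jpoly" where
  "euler_horner p k 0 = jpoly_pd k p"
| "euler_horner p k (Suc j) =
     jpoly_add (jpoly_pd k p) (jpoly_scale (-1) [] (jpoly_D (euler_horner p (Suc k) j)))"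

definition jpoly_euler :: "jpoly \<Rightarrow> jpoly" where
  "jpoly_euler p = euler_horner p 0 (max_jet_index p)"

definition jet_bounded :: "nat \<Rightarrow> jpoly \<Rightarrow> bool" where
  "jet_bounded b p \<longleftrightarrow> (\<forall>m\<in>snd ` set p. \<forall>v\<in>fst ` set m. jet_index v \<le> b)"

lemma list_max_le_iff: "list_max xs \<le> b \<longleftrightarrow> (\<forall>x\<in>set xs. x \<le> b)"
  by (induction xs) auto

lemma max_jet_index_le_iff: "max_jet_index p \<le> b \<longleftrightarrow> jet_bounded b p"
  by (force simp: max_jet_index_def list_max_le_iff jet_bounded_def)

lemma jet_bounded_mono: "jet_bounded b p \<Longrightarrow> b \<le> b' \<Longrightarrow> jet_bounded b' p"
  by (fastforce simp: jet_bounded_def)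

lemma jet_bounded_simps [simp]:
  "jet_bounded b []"
  "jet_bounded b (p @ q) \<longleftrightarrow> jet_bounded b p \<and> jet_bounded b q"
  "jet_bounded b (concat ps) \<longleftrightarrow> (\<forall>p\<in>set ps. jet_bounded b p)"
  by (auto simp: jet_bounded_def)

lemma jet_bounded_filter: "jet_bounded b p \<Longrightarrow> jet_bounded b (filter P p)"
  unfolding jet_bounded_def by fastforce

lemma vars_monomial_mult: "fst ` set (monomial_mult m n) \<subseteq> fst ` set m \<union> fst ` set n"
proof (induction m n rule: monomial_mult.induct)
  case (3 v e m w f n)
  then show ?case by (cases "compare_var v w") auto
qed auto

lemma monomials_jpoly_add: "snd ` set (jpoly_add p q) \<subseteq> snd ` set p \<union> snd ` set q"
proof (induction p q rule: jpoly_add.induct)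
  case (3 a m p b n q)
  then show ?case by (cases "compare_monomial m n") auto
qed auto

lemma monomials_jpoly_normalize: "snd ` set (jpoly_normalize p) \<subseteq> snd ` set p"
proof (induction p rule: jpoly_normalize.induct)
  case (3 t t' p)
  let ?p = "t # t' # p" and ?h = "Suc (Suc (length p)) div 2"
  have "snd ` set (jpoly_normalize ?p)
      \<subseteq> snd ` set (jpoly_normalize (take ?h ?p)) \<union> snd ` set (jpoly_normalize (drop ?h ?p))"
    by (simp only: jpoly_normalize.simps monomials_jpoly_add)
  also have "\<dots> \<subseteq> snd ` set ?p"
    using 3 set_take_subset[of ?h ?p] set_drop_subset[of ?h ?p] by blast
  finally show ?case .
qed auto

lemma jet_bounded_add: "jet_bounded b p \<Longrightarrow> jet_bounded b q \<Longrightarrow> jet_bounded b (jpoly_add p q)"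
  using monomials_jpoly_add[of p q] unfolding jet_bounded_def by blast

lemma jet_bounded_normalize: "jet_bounded b p \<Longrightarrow> jet_bounded b (jpoly_normalize p)"
  using monomials_jpoly_normalize[of p] unfolding jet_bounded_def by blast

lemma jet_bounded_scale:
  "\<forall>v\<in>fst ` set m. jet_index v \<le> b \<Longrightarrow> jet_bounded b q \<Longrightarrow> jet_bounded b (jpoly_scale a m q)"
  unfolding jet_bounded_def jpoly_scale_def using vars_monomial_mult[of m] by fastforce

lemma jet_bounded_monomial_pd:
  "\<forall>v\<in>fst ` set m. jet_index v \<le> b \<Longrightarrow> jet_bounded b (monomial_pd k m)"
proof (induction m)
  case (Cons ve m)
  obtain v e where ve: "ve = (v, e)" by fastforce
  have "jet_bounded b (var_pd k v)"
    by (cases "(k, v)" rule: var_pd.cases) (auto simp: jet_bounded_def)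
  then show ?case
    using Cons ve by (auto intro!: jet_bounded_scale simp: var_power_def)
qed simp

lemma jet_bounded_pd: "jet_bounded b p \<Longrightarrow> jet_bounded b (jpoly_pd k p)"
proof -
  assume p: "jet_bounded b p"
  have "jet_bounded b (jpoly_scale a [] (monomial_pd k m))" if "(a, m) \<in> set p" for a m
    using p that by (intro jet_bounded_scale jet_bounded_monomial_pd) (auto simp: jet_bounded_def)
  then show ?thesis
    unfolding jpoly_pd_def by (auto intro!: jet_bounded_normalize)
qed

lemma jet_bounded_D: "jet_bounded b p \<Longrightarrow> jet_bounded (Suc b) (jpoly_D p)"
proof -
  assume p: "jet_bounded b p"
  then have "max_jet_index p \<le> b" by (simp add: max_jet_index_le_iff)
  moreover have "jet_bounded (Suc b) (jpoly_pd k p)" for k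
    using p by (auto intro: jet_bounded_pd jet_bounded_mono)
  ultimately show ?thesis
    unfolding jpoly_D_def jpoly_total_D_def
    by (auto intro!: jet_bounded_normalize jet_bounded_scale)
qed

lemma jet_bounded_euler_horner: "jet_bounded b p \<Longrightarrow> jet_bounded (b + j) (euler_horner p k j)"
proof (induction j arbitrary: k)
  case 0
  then show ?case by (simp add: jet_bounded_pd)
next
  case (Suc j)
  have "jet_bounded (b + Suc j) (jpoly_pd k p)"
    using Suc.prems by (auto intro: jet_bounded_pd jet_bounded_mono)
  moreover have "jet_bounded (b + Suc j) (jpoly_D (euler_horner p (Suc k) j))"
    using Suc by (simp add: jet_bounded_D)
  ultimately show ?case
    by (auto intro!: jet_bounded_add jet_bounded_scale)
qed

lemma jet_bounded_euler: "jet_bounded b p \<Longrightarrow> jet_bounded (2 * b) (jpoly_euler p)"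
  unfolding jpoly_euler_def
  by (rule jet_bounded_mono[OF jet_bounded_euler_horner]) (auto simp: max_jet_index_le_iff)

lemma monomial_pd_eq_Nil: "\<forall>v\<in>fst ` set m. jet_index v < k \<Longrightarrow> monomial_pd k m = []"
proof (induction m)
  case (Cons ve m)
  obtain v e where ve: "ve = (v, e)" by fastforce
  have "var_pd k v = []"
    using Cons.prems ve by (cases "(k, v)" rule: var_pd.cases) auto
  then show ?case
    using Cons ve by (simp add: jpoly_scale_def)
qed simp

lemma jpoly_pd_eq_Nil: "max_jet_index p < k \<Longrightarrow> jpoly_pd k p = []"
proof -
  assume "max_jet_index p < k"
  then have "\<forall>m\<in>snd ` set p. \<forall>v\<in>fst ` set m. jet_index v < k"
    using max_jet_index_le_iff[of p "max_jet_index p"] by (fastforce simp: jet_bounded_def)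
  then have "concat (map (\<lambda>(a, m). jpoly_scale a [] (monomial_pd k m)) p) = []"
    by (auto simp: monomial_pd_eq_Nil jpoly_scale_def)
  then show ?thesis
    unfolding jpoly_pd_def by (simp only: jpoly_normalize.simps(1))
qed

lemma iter_jpoly_total_D_Nil [simp]: "(jpoly_total_D N ^^ n) [] = []"
  by (induction n) (simp_all add: jpoly_total_D_def jpoly_pd_def jpoly_scale_def)

lemma eval_jpoly_total_D:
  "eval_jpoly \<rho> (jpoly_total_D N p) = (\<Sum>k<N. \<rho> (Jet (Suc k)) * eval_jpoly \<rho> (jpoly_pd k p))"
  by (simp add: jpoly_total_D_def eval_jpoly_concat o_def interv_sum_list_conv_sum_set_nat
      atLeast0LessThan)

lemma eval_jpoly_D:
  assumes "max_jet_index p < N"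
  shows "eval_jpoly \<rho> (jpoly_D p) = eval_jpoly \<rho> (jpoly_total_D N p)"
proof -
  have "(\<Sum>k<Suc (max_jet_index p). \<rho> (Jet (Suc k)) * eval_jpoly \<rho> (jpoly_pd k p))
      = (\<Sum>k<N. \<rho> (Jet (Suc k)) * eval_jpoly \<rho> (jpoly_pd k p))"
    by (rule sum.mono_neutral_left) (use assms in \<open>auto simp: jpoly_pd_eq_Nil\<close>)
  then show ?thesis
    by (simp add: jpoly_D_def eval_jpoly_total_D)
qed

section \<open>Soundness in jet space\<close>

fun jet_env :: "(nat \<Rightarrow> real \<Rightarrow> real) \<Rightarrow> real \<Rightarrow> (nat \<Rightarrow> real) \<Rightarrow> var \<Rightarrow> real" where
  "jet_env fs eps U Eps = eps"
| "jet_env fs eps U Scale = 1 / 17280"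
| "jet_env fs eps U (Jet k) = U k"
| "jet_env fs eps U (Coeff i n) = (deriv ^^ n) (fs i) (U 0)"

definition jet_eval :: "(nat \<Rightarrow> real \<Rightarrow> real) \<Rightarrow> real \<Rightarrow> jpoly \<Rightarrow> jetfun" where
  "jet_eval fs eps p U = eval_jpoly (jet_env fs eps U) p"

lemma smooth_has_real_derivative_iterated_deriv:
  assumes "smooth g"
  shows "((deriv ^^ n) g has_real_derivative (deriv ^^ Suc n) g x) (at x)"
proof -
  have "(deriv ^^ n) g differentiable (at x)"
    using assms by (simp add: smooth_def differentiable_on_def)
  then show ?thesis by (simp add: DERIV_deriv_iff_real_differentiable)
qed

context
  fixes fs :: "nat \<Rightarrow> real \<Rightarrow> real" and eps :: real
  assumes smooth: "\<forall>i. smooth (fs i)"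
begin

lemma var_pd_has_real_derivative:
  "((\<lambda>t. jet_env fs eps (U(k := t)) v) has_real_derivative
      eval_jpoly (jet_env fs eps (U(k := x))) (var_pd k v)) (at x)"
proof (cases v)
  case (Coeff i n)
  then show ?thesis
    using smooth_has_real_derivative_iterated_deriv[OF smooth[rule_format, of i], of n x]
    by (cases "k = 0") auto
qed auto

lemma monomial_pd_has_real_derivative:
  "((\<lambda>t. eval_monomial (jet_env fs eps (U(k := t))) m) has_real_derivative
      eval_jpoly (jet_env fs eps (U(k := x))) (monomial_pd k m)) (at x)"
proof (induction m)
  case (Cons ve m)
  obtain v e where ve: "ve = (v, e)" by fastforce
  let ?\<rho> = "\<lambda>t. jet_env fs eps (U(k := t))"
  have "((\<lambda>t. ?\<rho> t v ^ e * eval_monomial (?\<rho> t) m) has_real_derivative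
      of_nat e * (eval_jpoly (?\<rho> x) (var_pd k v) * ?\<rho> x v ^ (e - Suc 0)) * eval_monomial (?\<rho> x) m
      + eval_jpoly (?\<rho> x) (monomial_pd k m) * ?\<rho> x v ^ e) (at x)"
    by (rule DERIV_mult[OF DERIV_power[OF var_pd_has_real_derivative] Cons.IH])
  then show ?case
    unfolding ve eval_monomial_simps
    by (rule DERIV_cong) (cases e, simp_all add: algebra_simps var_power_def fun_upd_def)
qed simp

lemma eval_jpoly_pd:
  "eval_jpoly \<rho> (jpoly_pd k p) = (\<Sum>(a, m)\<leftarrow>p. of_int a * eval_jpoly \<rho> (monomial_pd k m))"
  by (induction p) (auto simp: jpoly_pd_def eval_jpoly_concat)

lemma jpoly_pd_has_real_derivative:
  "((\<lambda>t. eval_jpoly (jet_env fs eps (U(k := t))) p) has_real_derivative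
      eval_jpoly (jet_env fs eps (U(k := x))) (jpoly_pd k p)) (at x)"
proof (induction p)
  case (Cons am p)
  obtain a m where am: "am = (a, m)" by fastforce
  have "((\<lambda>t. of_int a * eval_monomial (jet_env fs eps (U(k := t))) m
        + eval_jpoly (jet_env fs eps (U(k := t))) p) has_real_derivative
      of_int a * eval_jpoly (jet_env fs eps (U(k := x))) (monomial_pd k m)
        + eval_jpoly (jet_env fs eps (U(k := x))) (jpoly_pd k p)) (at x)"
    by (rule DERIV_add[OF DERIV_cmult[OF monomial_pd_has_real_derivative] Cons.IH])
  then show ?case
    unfolding am eval_jpoly_simps by (rule DERIV_cong) (simp add: eval_jpoly_pd fun_upd_def)
qed (simp add: jpoly_pd_def)

lemma jet_pd_jet_eval: "jet_pd k (jet_eval fs eps p) = jet_eval fs eps (jpoly_pd k p)"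
proof
  fix U
  show "jet_pd k (jet_eval fs eps p) U = jet_eval fs eps (jpoly_pd k p) U"
    using jpoly_pd_has_real_derivative[where U = U and k = k and x = "U k" and p = p]
    unfolding jet_pd_def jet_eval_def by (simp add: DERIV_imp_deriv)
qed

lemma total_D_jet_eval: "total_D N (jet_eval fs eps p) = jet_eval fs eps (jpoly_total_D N p)"
  by (rule ext) (simp add: total_D_def jet_pd_jet_eval jet_eval_def eval_jpoly_total_D)

lemma iter_total_D_jet_eval:
  "(total_D N ^^ n) (jet_eval fs eps p) = jet_eval fs eps ((jpoly_total_D N ^^ n) p)"
  by (induction n) (simp_all add: total_D_jet_eval)

lemma total_D_jet_eval_jpoly_D:
  "max_jet_index p < N \<Longrightarrow> total_D N (jet_eval fs eps p) = jet_eval fs eps (jpoly_D p)"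
  by (rule ext) (simp add: total_D_jet_eval jet_eval_def eval_jpoly_D)

lemma jet_pd_jet_eval_sum:
  assumes "finite I"
  shows "jet_pd k (\<lambda>U. \<Sum>i\<in>I. c i * jet_eval fs eps (q i) U)
    = (\<lambda>U. \<Sum>i\<in>I. c i * jet_eval fs eps (jpoly_pd k (q i)) U)"
proof
  fix U
  have "((\<lambda>t. \<Sum>i\<in>I. c i * eval_jpoly (jet_env fs eps (U(k := t))) (q i)) has_real_derivative
      (\<Sum>i\<in>I. c i * eval_jpoly (jet_env fs eps (U(k := U k))) (jpoly_pd k (q i)))) (at (U k))"
    by (intro DERIV_sum DERIV_cmult jpoly_pd_has_real_derivative)
  then show "jet_pd k (\<lambda>U. \<Sum>i\<in>I. c i * jet_eval fs eps (q i) U) U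
      = (\<Sum>i\<in>I. c i * jet_eval fs eps (jpoly_pd k (q i)) U)"
    unfolding jet_pd_def jet_eval_def by (simp add: DERIV_imp_deriv)
qed

lemma total_D_jet_eval_sum:
  assumes "finite I"
  shows "total_D N (\<lambda>U. \<Sum>i\<in>I. c i * jet_eval fs eps (q i) U)
    = (\<lambda>U. \<Sum>i\<in>I. c i * jet_eval fs eps (jpoly_total_D N (q i)) U)"
proof
  fix U
  have "total_D N (\<lambda>U. \<Sum>i\<in>I. c i * jet_eval fs eps (q i) U) U
      = (\<Sum>k<N. U (Suc k) * (\<Sum>i\<in>I. c i * jet_eval fs eps (jpoly_pd k (q i)) U))"
    by (simp add: total_D_def jet_pd_jet_eval_sum[OF assms])
  also have "\<dots> = (\<Sum>i\<in>I. c i * (\<Sum>k<N. U (Suc k) * jet_eval fs eps (jpoly_pd k (q i)) U))"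
    by (simp add: sum_distrib_left sum.swap[of _ I] algebra_simps)
  also have "\<dots> = (\<Sum>i\<in>I. c i * jet_eval fs eps (jpoly_total_D N (q i)) U)"
    by (simp add: jet_eval_def eval_jpoly_total_D)
  finally show "total_D N (\<lambda>U. \<Sum>i\<in>I. c i * jet_eval fs eps (q i) U) U
      = (\<Sum>i\<in>I. c i * jet_eval fs eps (jpoly_total_D N (q i)) U)" .
qed

lemma iter_total_D_jet_eval_sum:
  assumes "finite I"
  shows "(total_D N ^^ n) (\<lambda>U. \<Sum>i\<in>I. c i * jet_eval fs eps (q i) U)
    = (\<lambda>U. \<Sum>i\<in>I. c i * jet_eval fs eps ((jpoly_total_D N ^^ n) (q i)) U)"
  by (induction n) (simp_all add: total_D_jet_eval_sum[OF assms])

lemma var_deriv_jet_eval_sum: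
  assumes "finite I"
  shows "var_deriv N (\<lambda>U. \<Sum>i\<in>I. c i * jet_eval fs eps (q i) U) U
    = (\<Sum>i\<in>I. c i * var_deriv N (jet_eval fs eps (q i)) U)"
proof -
  let ?t = "\<lambda>k i. jet_eval fs eps ((jpoly_total_D N ^^ k) (jpoly_pd k (q i))) U"
  have "var_deriv N (\<lambda>U. \<Sum>i\<in>I. c i * jet_eval fs eps (q i) U) U
      = (\<Sum>k<N. (-1) ^ k * (\<Sum>i\<in>I. c i * ?t k i))"
    by (simp add: var_deriv_def jet_pd_jet_eval_sum[OF assms] iter_total_D_jet_eval_sum[OF assms])
  also have "\<dots> = (\<Sum>i\<in>I. c i * (\<Sum>k<N. (-1) ^ k * ?t k i))"
    by (simp add: sum_distrib_left sum.swap[of _ I] algebra_simps)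
  also have "\<dots> = (\<Sum>i\<in>I. c i * var_deriv N (jet_eval fs eps (q i)) U)"
    by (simp add: var_deriv_def jet_pd_jet_eval iter_total_D_jet_eval)
  finally show ?thesis .
qed

lemma var_deriv_jet_eval_lincomb:
  "var_deriv N (\<lambda>U. a * jet_eval fs eps p U + b * jet_eval fs eps q U) U
    = a * var_deriv N (jet_eval fs eps p) U + b * var_deriv N (jet_eval fs eps q) U"
  using var_deriv_jet_eval_sum[of UNIV N "\<lambda>i. if i then a else b" "\<lambda>i. if i then p else q" U]
  by (simp add: UNIV_bool add.commute)

lemma jet_eval_euler_horner:
  assumes "jet_bounded b p" and "b + j < N"
  shows "jet_eval fs eps (euler_horner p k j) U
    = (\<Sum>i\<le>j. (-1) ^ i * jet_eval fs eps ((jpoly_total_D N ^^ i) (jpoly_pd (k + i) p)) U)"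
  using assms(2)
proof (induction j arbitrary: k U)
  case 0
  then show ?case by simp
next
  case (Suc j)
  let ?E = "euler_horner p (Suc k) j"
  let ?t = "\<lambda>i. jet_eval fs eps ((jpoly_total_D N ^^ i) (jpoly_pd (k + i) p)) U"
  have "max_jet_index ?E < N"
    using jet_bounded_euler_horner[OF assms(1), of j "Suc k"] Suc.prems
    by (simp add: max_jet_index_le_iff[symmetric])
  then have "jet_eval fs eps (jpoly_D ?E) U = total_D N (jet_eval fs eps ?E) U"
    by (simp add: total_D_jet_eval_jpoly_D)
  also have "jet_eval fs eps ?E = (\<lambda>U. \<Sum>i\<le>j. (-1) ^ i *
      jet_eval fs eps ((jpoly_total_D N ^^ i) (jpoly_pd (Suc k + i) p)) U)"
    using Suc by auto
  also have "total_D N \<dots> U = (\<Sum>i\<le>j. (-1) ^ i * ?t (Suc i))"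
    by (simp add: total_D_jet_eval_sum)
  finally have D: "jet_eval fs eps (jpoly_D ?E) U = (\<Sum>i\<le>j. (-1) ^ i * ?t (Suc i))" .
  have "(\<Sum>i\<le>Suc j. (-1) ^ i * ?t i) = (-1) ^ 0 * ?t 0 + (\<Sum>i\<le>j. (-1) ^ Suc i * ?t (Suc i))"
    by (rule sum.atMost_Suc_shift)
  also have "\<dots> = ?t 0 - (\<Sum>i\<le>j. (-1) ^ i * ?t (Suc i))"
    by (simp add: sum_negf)
  finally show ?case
    using D by (simp add: jet_eval_def)
qed

lemma var_deriv_jet_eval:
  assumes "2 * max_jet_index p < N"
  shows "var_deriv N (jet_eval fs eps p) = jet_eval fs eps (jpoly_euler p)"
proof
  fix U
  let ?b = "max_jet_index p"
  let ?t = "\<lambda>k. (-1) ^ k * jet_eval fs eps ((jpoly_total_D N ^^ k) (jpoly_pd k p)) U"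
  have "var_deriv N (jet_eval fs eps p) U = (\<Sum>k<N. ?t k)"
    by (simp add: var_deriv_def jet_pd_jet_eval iter_total_D_jet_eval)
  also have "\<dots> = (\<Sum>k\<le>?b. ?t k)"
    by (rule sum.mono_neutral_right) (use assms in \<open>auto simp: jpoly_pd_eq_Nil jet_eval_def\<close>)
  also have "\<dots> = jet_eval fs eps (jpoly_euler p) U"
    using jet_eval_euler_horner[of ?b p ?b N 0 U] assms
    by (simp add: jpoly_euler_def max_jet_index_le_iff[symmetric])
  finally show "var_deriv N (jet_eval fs eps p) U = jet_eval fs eps (jpoly_euler p) U" .
qed

end

section \<open>Truncation in \<open>\<epsilon>\<close>\<close>

definition eps_degree :: "monomial \<Rightarrow> nat" where
  "eps_degree m = (\<Sum>(v, e)\<leftarrow>m. if v = Eps then e else 0)"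

definition jpoly_mult_eps_where :: "(nat \<Rightarrow> bool) \<Rightarrow> jpoly \<Rightarrow> jpoly \<Rightarrow> jpoly" where
  "jpoly_mult_eps_where P p q = jpoly_normalize (concat (map (\<lambda>(a, m).
     jpoly_scale a m (filter (\<lambda>(b, n). P (eps_degree m + eps_degree n)) q)) p))"

definition jpoly_divide_eps :: "nat \<Rightarrow> jpoly \<Rightarrow> jpoly" where
  "jpoly_divide_eps d p =
     map (\<lambda>(a, m). (a, var_power Eps (eps_degree m - d) @ filter (\<lambda>(v, e). v \<noteq> Eps) m)) p"

lemma eps_degree_simps [simp]:
  "eps_degree [] = 0"
  "eps_degree ((v, e) # m) = (if v = Eps then e else 0) + eps_degree m"
  by (simp_all add: eps_degree_def)

lemma eps_degree_monomial_mult: "eps_degree (monomial_mult m n) = eps_degree m + eps_degree n"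
proof (induction m n rule: monomial_mult.induct)
  case (3 v e m w f n)
  then show ?case
    by (cases "compare_var v w") (auto dest: compare_var_Equiv)
qed auto

lemma eval_jpoly_mult_eps_where_split:
  "eval_jpoly \<rho> (jpoly_mult_eps_where P p q) + eval_jpoly \<rho> (jpoly_mult_eps_where (\<lambda>d. \<not> P d) p q)
    = eval_jpoly \<rho> p * eval_jpoly \<rho> q"
proof -
  have filter_split: "eval_jpoly \<rho> (filter Q q) + eval_jpoly \<rho> (filter (\<lambda>t. \<not> Q t) q) = eval_jpoly \<rho> q"
    for Q :: "int \<times> monomial \<Rightarrow> bool"
    by (induction q) auto
  show ?thesis
  proof (induction p)
    case (Cons am p)
    obtain a m where am: "am = (a, m)" by fastforce
    have "filter (\<lambda>(b, n). \<not> P (eps_degree m + eps_degree n)) q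
        = filter (\<lambda>t. \<not> (\<lambda>(b, n). P (eps_degree m + eps_degree n)) t) q"
      by (rule filter_cong) auto
    then show ?case
      using Cons filter_split[of "\<lambda>(b, n). P (eps_degree m + eps_degree n)"]
      by (simp add: am jpoly_mult_eps_where_def algebra_simps flip: distrib_left)
  qed (simp add: jpoly_mult_eps_where_def)
qed

lemma jet_bounded_mult_eps_where:
  assumes "jet_bounded b p" and "jet_bounded b q"
  shows "jet_bounded b (jpoly_mult_eps_where P p q)"
proof -
  have "jet_bounded b (jpoly_scale a m (filter Q q))" if "(a, m) \<in> set p" for a m Q
    using assms that by (intro jet_bounded_scale jet_bounded_filter) (auto simp: jet_bounded_def)
  then show ?thesis
    unfolding jpoly_mult_eps_where_def by (auto intro!: jet_bounded_normalize)
qed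

lemma jet_bounded_divide_eps: "jet_bounded b p \<Longrightarrow> jet_bounded b (jpoly_divide_eps d p)"
  unfolding jet_bounded_def jpoly_divide_eps_def var_power_def by (fastforce split: if_splits)

lemma eps_degree_mult_eps_where:
  "m \<in> snd ` set (jpoly_mult_eps_where P p q) \<Longrightarrow> P (eps_degree m)"
  using monomials_jpoly_normalize
  by (fastforce simp: jpoly_mult_eps_where_def jpoly_scale_def eps_degree_monomial_mult)

lemma eval_monomial_eps_split:
  "eval_monomial \<rho> m = \<rho> Eps ^ eps_degree m * eval_monomial \<rho> (filter (\<lambda>(v, e). v \<noteq> Eps) m)"
  by (induction m) (auto simp: power_add)

lemma eval_jpoly_divide_eps:
  "\<forall>m\<in>snd ` set p. d \<le> eps_degree m \<Longrightarrow>
    eval_jpoly \<rho> p = \<rho> Eps ^ d * eval_jpoly \<rho> (jpoly_divide_eps d p)"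
proof (induction p)
  case (Cons am p)
  obtain a m where am: "am = (a, m)" by fastforce
  then have "d \<le> eps_degree m" using Cons.prems by auto
  then have "eval_monomial \<rho> m
      = \<rho> Eps ^ d * eval_monomial \<rho> (var_power Eps (eps_degree m - d) @ filter (\<lambda>(v, e). v \<noteq> Eps) m)"
    by (subst eval_monomial_eps_split) (simp flip: power_add)
  then show ?case
    using Cons am by (simp add: jpoly_divide_eps_def algebra_simps)
qed (simp add: jpoly_divide_eps_def)

lemma isCont_jet_eval_eps: "isCont (\<lambda>eps. jet_eval fs eps p U) x"
proof -
  have "isCont (\<lambda>eps. jet_env fs eps U v) x" for v
    by (cases v) auto
  then have "isCont (\<lambda>eps. eval_monomial (jet_env fs eps U) m) x" for m
    by (induction m) (auto intro!: continuous_intros)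
  then show ?thesis
    unfolding jet_eval_def by (induction p) (auto intro!: continuous_intros)
qed

lemma bigo_power_mult_isCont:
  assumes "isCont h 0"
  shows "(\<lambda>x::real. x ^ d * h x) \<in> O[at 0](\<lambda>x. x ^ d)"
proof -
  have "((\<lambda>x. h x / 1) \<longlongrightarrow> h 0) (at 0)"
    using assms by (simp add: isCont_def)
  then have "h \<in> O[at 0](\<lambda>_. 1)"
    by (rule bigoI_tendsto) simp
  then show ?thesis
    by (rule landau_o.big_1_mult[OF landau_o.big_refl])
qed

section \<open>The densities \<open>h\<^sub>f\<close>\<close>

definition ham_jpoly :: "nat \<Rightarrow> jpoly" where
  "ham_jpoly i =
    [(-720, [(Eps, 2), (Scale, 1), (Jet 1, 2), (Coeff 0 0, 1), (Coeff i 3, 1)]),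
     (-15, [(Eps, 4), (Scale, 1), (Jet 1, 4), (Coeff 0 0, 1), (Coeff 0 1, 1), (Coeff i 5, 1)]),
     (-15, [(Eps, 4), (Scale, 1), (Jet 1, 4), (Coeff 0 0, 1), (Coeff 0 2, 1), (Coeff i 4, 1)]),
     (-5, [(Eps, 4), (Scale, 1), (Jet 1, 4), (Coeff 0 0, 2), (Coeff i 6, 1)]),
     (-2880, [(Eps, 4), (Scale, 1), (Jet 1, 4), (Coeff 1 0, 1), (Coeff i 5, 1)]),
     (-2880, [(Eps, 4), (Scale, 1), (Jet 1, 4), (Coeff 1 1, 1), (Coeff i 4, 1)]),
     (17280, [(Eps, 4), (Scale, 1), (Jet 1, 4), (Coeff 2 0, 1), (Coeff i 3, 1)]),
     (36, [(Eps, 4), (Scale, 1), (Jet 2, 2), (Coeff 0 0, 2), (Coeff i 4, 1)]),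
     (17280, [(Eps, 4), (Scale, 1), (Jet 2, 2), (Coeff 1 0, 1), (Coeff i 3, 1)]),
     (17280, [(Scale, 1), (Coeff i 0, 1)])]"

definition bracket_jpoly_where :: "(nat \<Rightarrow> bool) \<Rightarrow> nat \<Rightarrow> nat \<Rightarrow> jpoly" where
  "bracket_jpoly_where P i j =
     jpoly_mult_eps_where P (jpoly_euler (ham_jpoly i)) (jpoly_D (jpoly_euler (ham_jpoly j)))"

lemma ham_density_eq_jet_eval:
  "ham_density (fs 0) (fs 1) (fs 2) (fs i) eps = jet_eval fs eps (ham_jpoly i)"
  by (rule ext) (simp add: ham_density_def Let_def jet_eval_def ham_jpoly_def field_simps)

lemma jet_bounded_ham_jpoly: "jet_bounded 2 (ham_jpoly i)"
  by (simp add: ham_jpoly_def jet_bounded_def)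

lemma jet_bounded_bracket_jpoly_where: "jet_bounded 5 (bracket_jpoly_where P i j)"
proof -
  have "jet_bounded 5 (jpoly_euler (ham_jpoly i))"
    using jet_bounded_euler[OF jet_bounded_ham_jpoly] by (rule jet_bounded_mono) simp
  moreover have "jet_bounded 5 (jpoly_D (jpoly_euler (ham_jpoly j)))"
    using jet_bounded_D[OF jet_bounded_euler[OF jet_bounded_ham_jpoly]] by simp
  ultimately show ?thesis
    unfolding bracket_jpoly_where_def by (rule jet_bounded_mult_eps_where)
qed

context
  fixes fs :: "nat \<Rightarrow> real \<Rightarrow> real" and eps :: real and N :: nat
  assumes smooth: "\<forall>i. smooth (fs i)" and N: "10 < N"
begin

lemma bracket_density_ham_split:
  "bracket_density N (jet_eval fs eps (ham_jpoly i)) (jet_eval fs eps (ham_jpoly j)) U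
    = jet_eval fs eps (bracket_jpoly_where P i j) U
      + jet_eval fs eps (bracket_jpoly_where (\<lambda>d. \<not> P d) i j) U"
proof -
  have "var_deriv N (jet_eval fs eps (ham_jpoly i)) = jet_eval fs eps (jpoly_euler (ham_jpoly i))"
    using N jet_bounded_ham_jpoly[of i]
    by (intro var_deriv_jet_eval[OF smooth]) (simp add: max_jet_index_le_iff[symmetric])
  moreover have "var_deriv N (jet_eval fs eps (ham_jpoly j)) = jet_eval fs eps (jpoly_euler (ham_jpoly j))"
    using N jet_bounded_ham_jpoly[of j]
    by (intro var_deriv_jet_eval[OF smooth]) (simp add: max_jet_index_le_iff[symmetric])
  moreover have "total_D N (jet_eval fs eps (jpoly_euler (ham_jpoly j)))
      = jet_eval fs eps (jpoly_D (jpoly_euler (ham_jpoly j)))"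
    using N jet_bounded_euler[OF jet_bounded_ham_jpoly, of j]
    by (intro total_D_jet_eval_jpoly_D[OF smooth]) (simp add: max_jet_index_le_iff[symmetric])
  ultimately show ?thesis
    by (simp add: bracket_density_def bracket_jpoly_where_def jet_eval_def
        eval_jpoly_mult_eps_where_split)
qed

lemma var_deriv_bracket_density_ham:
  fixes i j :: nat
  defines "low \<equiv> bracket_jpoly_where (\<lambda>d. d < 6) i j"
    and "high \<equiv> jpoly_divide_eps 6 (bracket_jpoly_where (\<lambda>d. \<not> d < 6) i j)"
  shows "var_deriv N (bracket_density N (jet_eval fs eps (ham_jpoly i)) (jet_eval fs eps (ham_jpoly j))) U
    = jet_eval fs eps (jpoly_euler low) U + eps ^ 6 * jet_eval fs eps (jpoly_euler high) U"
proof -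
  have "\<forall>m\<in>snd ` set (bracket_jpoly_where (\<lambda>d. \<not> d < 6) i j). 6 \<le> eps_degree m"
    using eps_degree_mult_eps_where[where P = "\<lambda>d. \<not> d < 6"]
    unfolding bracket_jpoly_where_def by fastforce
  then have high_eq: "jet_eval fs eps (bracket_jpoly_where (\<lambda>d. \<not> d < 6) i j) U
      = eps ^ 6 * jet_eval fs eps high U" for U
    unfolding high_def jet_eval_def by (subst eval_jpoly_divide_eps) simp_all
  have "bracket_density N (jet_eval fs eps (ham_jpoly i)) (jet_eval fs eps (ham_jpoly j))
      = (\<lambda>U. 1 * jet_eval fs eps low U + eps ^ 6 * jet_eval fs eps high U)"
    by (rule ext) (simp add: bracket_density_ham_split[where P = "\<lambda>d. d < 6"] low_def high_eq)
  moreover have "jet_bounded 5 low" and "jet_bounded 5 high"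
    unfolding low_def high_def by (auto intro: jet_bounded_bracket_jpoly_where jet_bounded_divide_eps)
  then have "2 * max_jet_index low < N" and "2 * max_jet_index high < N"
    using N by (simp_all flip: max_jet_index_le_iff)
  ultimately show ?thesis
    by (simp only: var_deriv_jet_eval_lincomb[OF smooth]) (simp add: var_deriv_jet_eval[OF smooth])
qed

end

text \<open>Up to order eps^4 the bracket density is a total x-derivative.\<close>

lemma euler_bracket_jpoly_low_eq_Nil: "jpoly_euler (bracket_jpoly_where (\<lambda>d. d < 6) 3 4) = []"
  by code_simp

theorem lemma2p3:
  fixes c p s f g :: "real \<Rightarrow> real" and N :: nat
  assumes "smooth c" and "smooth p" and "smooth s" and "smooth f" and "smooth g"
    and "N \<ge> 16"
  shows "\<forall>U. (\<lambda>eps. var_deriv N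
              (bracket_density N (ham_density c p s f eps) (ham_density c p s g eps)) U)
            \<in> O[at 0](\<lambda>eps. eps ^ 6)"
proof
  fix U :: "nat \<Rightarrow> real"
  define fs :: "nat \<Rightarrow> real \<Rightarrow> real" where
    "fs = (\<lambda>i. if i = 0 then c else if i = 1 then p else if i = 2 then s else if i = 3 then f else g)"
  have smooth: "\<forall>i. smooth (fs i)"
    using assms by (simp add: fs_def)
  have fs: "fs 0 = c" "fs 1 = p" "fs 2 = s" "fs 3 = f" "fs 4 = g"
    by (simp_all add: fs_def)
  have ham: "ham_density c p s f eps = jet_eval fs eps (ham_jpoly 3)"
    "ham_density c p s g eps = jet_eval fs eps (ham_jpoly 4)" for eps
    using ham_density_eq_jet_eval[where fs = fs and eps = eps and i = 3]
      ham_density_eq_jet_eval[where fs = fs and eps = eps and i = 4]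
    by (simp_all only: fs)
  define Z where "Z = jpoly_euler (jpoly_divide_eps 6 (bracket_jpoly_where (\<lambda>d. \<not> d < 6) 3 4))"
  have "var_deriv N (bracket_density N (ham_density c p s f eps) (ham_density c p s g eps)) U
      = eps ^ 6 * jet_eval fs eps Z U" for eps
    using var_deriv_bracket_density_ham[OF smooth, where N = N and eps = eps and i = 3 and j = 4]
      assms(6)
    by (simp add: ham Z_def euler_bracket_jpoly_low_eq_Nil jet_eval_def)
  moreover have "(\<lambda>eps. eps ^ 6 * jet_eval fs eps Z U) \<in> O[at 0](\<lambda>eps. eps ^ 6)"
    by (intro bigo_power_mult_isCont isCont_jet_eval_eps)
  ultimately show "(\<lambda>eps. var_deriv N
      (bracket_density N (ham_density c p s f eps) (ham_density c p s g eps)) U)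
      \<in> O[at 0](\<lambda>eps. eps ^ 6)"
    by simp
qed

end
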